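(* Let $\beta\in\mathbb{C}$ and $N\geq2$ with $\beta^N=1$ and $\beta^k\neq1$ for $k=1,\dots,N-1$. Let $m\in\mathrm{Hol}(\mathbb{D})$, $m\not\equiv0$, and $T:\mathrm{Hol}(\mathbb{D})\to\mathrm{Hol}(\mathbb{D})$ given by $(Tf)(z)=m(z)f(\beta z)$. If $m(z_0)=0$ for some $z_0\in\mathbb{D}$, then $\sigma_p(T)=\emptyset$.
   Context: $\mathbb{D}$ is the open unit disc, $\mathrm{Hol}(\mathbb{D})$ the space of holomorphic functions on $\mathbb{D}$. $\sigma_p(T)$ is the set of $\lambda\in\mathbb{C}$ such that $\lambda\mathrm{Id}-T$ is not injective. *)

theory Defs
  imports "HOL-Complex_Analysis.Complex_Analysis"
begin

text \<open>Hol(D): functions holomorphic on the open unit disc. Elements are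
  identified when they agree on the disc.\<close>
definition Hol_D :: "(complex \<Rightarrow> complex) set" where
  "Hol_D = {f. f holomorphic_on ball 0 1}"

definition wcomp_op :: "(complex \<Rightarrow> complex) \<Rightarrow> complex \<Rightarrow> (complex \<Rightarrow> complex) \<Rightarrow> (complex \<Rightarrow> complex)" where
  "wcomp_op m \<beta> f = (\<lambda>z. m z * f (\<beta> * z))"

definition point_spectrum_Hol_D :: "((complex \<Rightarrow> complex) \<Rightarrow> (complex \<Rightarrow> complex)) \<Rightarrow> complex set" where
  "point_spectrum_Hol_D T = {c. \<exists>f \<in> Hol_D. (\<exists>z \<in> ball 0 1. f z \<noteq> 0) \<and>
       (\<forall>z \<in> ball 0 1. c * f z - T f z = 0)}"

end

theory Submission
  imports Defs
begin

text \<open>Suppose \<open>c f = T f\<close> on the disc with \<open>f \<noteq> 0\<close>. If \<open>c = 0\<close>, then \<open>m(z) f(\<beta> z) = 0\<close>, and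
  since holomorphic functions on a connected open set have no zero divisors, \<open>f \<equiv> 0\<close>.
  If \<open>c \<noteq> 0\<close>, iterating the eigenvalue equation \<open>N\<close> times and using \<open>\<beta>\<^sup>N = 1\<close> gives
  \<open>(c\<^sup>N - \<Prod>j<N. m(\<beta>\<^sup>j z)) f(z) = 0\<close>; the first factor equals \<open>c\<^sup>N \<noteq> 0\<close> at \<open>z\<^sub>0\<close>, so again \<open>f \<equiv> 0\<close>.\<close>

lemma holomorphic_eq_0_if_mult_eq_0:
  fixes f g :: "complex \<Rightarrow> complex"
  assumes "open S" "connected S"
    and "continuous_on S f" "g holomorphic_on S"
    and "\<forall>z\<in>S. f z * g z = 0"
    and "w \<in> S" "f w \<noteq> 0"
    and "z \<in> S"
  shows "g z = 0"
proof -
  define U where "U = S \<inter> f -` (-{0})"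
  have "open U"
    unfolding U_def using assms(1,3) by (intro continuous_open_preimage) auto
  moreover have "w \<in> U" "U \<subseteq> S"
    using assms(6,7) by (auto simp: U_def)
  moreover have "\<forall>u\<in>U. g u = 0"
    using assms(5) by (auto simp: U_def)
  ultimately show ?thesis
    using analytic_continuation_open[of U S g "\<lambda>_. 0"] assms(1,2,4,8) by auto
qed

lemma holomorphic_on_ball_compose_mult:
  fixes f :: "complex \<Rightarrow> complex"
  assumes "f holomorphic_on ball 0 r" "norm \<beta> \<le> 1"
  shows "(\<lambda>z. f (\<beta> * z)) holomorphic_on ball 0 r"
proof -
  have "(\<lambda>z. \<beta> * z) ` ball 0 r \<subseteq> ball 0 r"
    using assms(2) mult_left_le_one_le[of "norm _" "norm \<beta>"]
    by (force simp: norm_mult intro: le_less_trans)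
  then have "(f \<circ> (\<lambda>z. \<beta> * z)) holomorphic_on ball 0 r"
    by (intro holomorphic_on_compose_gen[OF _ assms(1)]) (auto intro!: holomorphic_intros)
  then show ?thesis
    by (simp add: o_def)
qed

lemma eigen_equation_iterate:
  fixes f m :: "'a::comm_ring_1 \<Rightarrow> 'b::comm_ring_1"
  assumes eigen: "\<forall>z\<in>S. c * f z = m z * f (\<beta> * z)"
    and invariant: "\<forall>z\<in>S. \<beta> * z \<in> S"
    and "z \<in> S"
  shows "c ^ k * f z = (\<Prod>j<k. m (\<beta> ^ j * z)) * f (\<beta> ^ k * z)"
proof (induction k)
  case 0
  then show ?case by simp
next
  case (Suc k)
  have "\<beta> ^ k * z \<in> S"
    using invariant \<open>z \<in> S\<close> by (induction k) (auto simp: mult.assoc)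
  then have step: "c * f (\<beta> ^ k * z) = m (\<beta> ^ k * z) * f (\<beta> ^ Suc k * z)"
    using eigen by (auto simp: mult.assoc)
  have "c ^ Suc k * f z = c * (c ^ k * f z)"
    by simp
  also have "\<dots> = (\<Prod>j<k. m (\<beta> ^ j * z)) * (c * f (\<beta> ^ k * z))"
    using Suc by (simp add: algebra_simps)
  also have "\<dots> = (\<Prod>j<Suc k. m (\<beta> ^ j * z)) * f (\<beta> ^ Suc k * z)"
    using step by (simp add: algebra_simps)
  finally show ?case .
qed

lemma mem_point_spectrum_wcomp_opE:
  assumes "c \<in> point_spectrum_Hol_D (wcomp_op m \<beta>)"
  obtains f w where "f holomorphic_on ball 0 1" "w \<in> ball 0 1" "f w \<noteq> 0"
    and "\<forall>z\<in>ball 0 1. c * f z = m z * f (\<beta> * z)"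
  using assms unfolding point_spectrum_Hol_D_def wcomp_op_def Hol_D_def by auto

lemma zero_notin_point_spectrum_wcomp_op:
  assumes "m \<in> Hol_D" "\<exists>z \<in> ball 0 1. m z \<noteq> 0" "norm \<beta> = 1"
  shows "0 \<notin> point_spectrum_Hol_D (wcomp_op m \<beta>)"
proof
  assume "0 \<in> point_spectrum_Hol_D (wcomp_op m \<beta>)"
  then obtain f w where f: "f holomorphic_on ball 0 1" and w: "w \<in> ball 0 1" "f w \<noteq> 0"
    and eigen: "\<forall>z\<in>ball 0 1. m z * f (\<beta> * z) = 0"
    by (elim mem_point_spectrum_wcomp_opE) auto
  obtain u where u: "u \<in> ball 0 1" "m u \<noteq> 0"
    using assms(2) by auto
  have "continuous_on (ball 0 1) m"
    using assms(1) holomorphic_on_imp_continuous_on by (auto simp: Hol_D_def)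
  moreover have "(\<lambda>z. f (\<beta> * z)) holomorphic_on ball 0 1"
    using f assms(3) by (simp add: holomorphic_on_ball_compose_mult)
  moreover have "w / \<beta> \<in> ball 0 1"
    using w assms(3) by (simp add: norm_divide)
  ultimately have "f (\<beta> * (w / \<beta>)) = 0"
    using holomorphic_eq_0_if_mult_eq_0[OF open_ball connected_ball _ _ eigen u] by blast
  moreover have "\<beta> \<noteq> 0"
    using assms(3) by auto
  ultimately show False
    using w by simp
qed

lemma nonzero_notin_point_spectrum_wcomp_op:
  assumes "c \<noteq> 0" "\<beta> ^ N = 1" "N > 0"
    and "m \<in> Hol_D" "z0 \<in> ball 0 1" "m z0 = 0"
  shows "c \<notin> point_spectrum_Hol_D (wcomp_op m \<beta>)"
proof
  assume "c \<in> point_spectrum_Hol_D (wcomp_op m \<beta>)"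
  then obtain f w where f: "f holomorphic_on ball 0 1" and w: "w \<in> ball 0 1" "f w \<noteq> 0"
    and eigen: "\<forall>z\<in>ball 0 1. c * f z = m z * f (\<beta> * z)"
    by (elim mem_point_spectrum_wcomp_opE)
  have "norm \<beta> = 1"
    using power_eq_1_iff[OF assms(2)] assms(3) by auto
  then have invariant: "\<forall>z\<in>ball 0 1. \<beta> * z \<in> ball 0 1"
    by (simp add: norm_mult)
  define M where "M z = (\<Prod>j<N. m (\<beta> ^ j * z))" for z
  have "M holomorphic_on ball 0 1"
    unfolding M_def using assms(4) \<open>norm \<beta> = 1\<close>
    by (intro holomorphic_on_prod holomorphic_on_ball_compose_mult)
      (auto simp: Hol_D_def norm_power)
  then have "continuous_on (ball 0 1) (\<lambda>z. c ^ N - M z)"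
    by (intro continuous_intros holomorphic_on_imp_continuous_on)
  moreover have "\<forall>z\<in>ball 0 1. (c ^ N - M z) * f z = 0"
    using eigen_equation_iterate[OF eigen invariant, of _ N] assms(2)
    by (auto simp: M_def algebra_simps)
  moreover have "M z0 = 0"
    unfolding M_def using assms(3,6) by (intro prod_zero) (auto intro!: bexI[of _ 0])
  ultimately have "f w = 0"
    using holomorphic_eq_0_if_mult_eq_0[OF open_ball connected_ball _ f _ assms(5) _ w(1)]
      assms(1) by auto
  with w show False
    by simp
qed

theorem proposition3p3:
  fixes \<beta> :: complex and N :: nat and m :: "complex \<Rightarrow> complex" and z0 :: complex
  assumes "N \<ge> 2"
    and "\<beta> ^ N = 1"
    and "\<forall>k\<in>{1..N-1}. \<beta> ^ k \<noteq> 1"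
    and "m \<in> Hol_D"
    and "\<exists>z \<in> ball 0 1. m z \<noteq> 0"
    and "z0 \<in> ball 0 1" and "m z0 = 0"
  shows "point_spectrum_Hol_D (wcomp_op m \<beta>) = {}"
proof -
  have "norm \<beta> = 1"
    using power_eq_1_iff[OF assms(2)] assms(1) by auto
  have "c \<notin> point_spectrum_Hol_D (wcomp_op m \<beta>)" for c
  proof (cases "c = 0")
    case True
    then show ?thesis
      using zero_notin_point_spectrum_wcomp_op[OF assms(4,5) \<open>norm \<beta> = 1\<close>] by simp
  next
    case False
    then show ?thesis
      using nonzero_notin_point_spectrum_wcomp_op[OF False assms(2) _ assms(4,6,7)] assms(1)
      by simp
  qed
  then show ?thesis
    by blast
qed

end
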